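(* Assume that there exists a disjoint stationary sequence on $\omega_2$. Then the $\omega_1$-approachability property fails.
   Context: For an uncountable ordinal $\alpha < \omega_2$, $P_{\omega_1}(\alpha)$ is the set of countable subsets of $\alpha$; a set $c \subseteq P_{\omega_1}(\alpha)$ is club if it is cofinal (under $\subseteq$) and closed under unions of countable increasing sequences, and $s \subseteq P_{\omega_1}(\alpha)$ is stationary if it meets every club in $P_{\omega_1}(\alpha)$. A disjoint stationary sequence on $\omega_2$ is a sequence $\langle s_\alpha : \alpha \in S \rangle$, where $S$ is a stationary subset of $\omega_2 \cap \mathrm{cof}(\omega_1)$, such that each $s_\alpha$ is a stationary subset of $P_{\omega_1}(\alpha)$ and $s_\alpha \cap s_\beta = \emptyset$ for all $\alpha < \beta$ in $S$. The $\omega_1$-approachability property is the statement that there exist a sequence $\langle a_i : i < \omega_2 \rangle$ of countable subsets of $\omega_2$ and a club $C \subseteq \omega_2$ such that for every limit ordinal $\alpha \in C$ there is a cofinal set $c \subseteq \alpha$ of order type $\mathrm{cf}(\alpha)$ such that for all $\beta < \alpha$, $c \cap \beta \in \{ a_i : i < \alpha \}$. *)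

theory Defs
  imports Main "HOL-Library.Countable_Set"
begin

(* Ordinals below omega_2 are modelled by the elements of a type 'a carrying a
   well-order r of order type omega_2 (Field r = UNIV).  An ordinal \<alpha> is
   identified with the set of its predecessors  underS r \<alpha>. *)

definition lt :: "'a rel \<Rightarrow> 'a \<Rightarrow> 'a \<Rightarrow> bool" where
  "lt r x y \<longleftrightarrow> (x, y) \<in> r \<and> x \<noteq> y"

definition le_aleph1 :: "'b set \<Rightarrow> bool" where
  "le_aleph1 X \<longleftrightarrow> (\<exists>w. Well_order w \<and> Field w = X \<and> (\<forall>x\<in>X. countable (underS w x)))"

definition omega2_order :: "'a rel \<Rightarrow> bool" where
  "omega2_order r \<longleftrightarrow> Well_order r \<and> Field r = UNIV \<and>
     (\<forall>a. le_aleph1 (underS r a)) \<and> \<not> le_aleph1 (UNIV :: 'a set)"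

definition unbounded :: "'a rel \<Rightarrow> 'a set \<Rightarrow> bool" where
  "unbounded r C \<longleftrightarrow> (\<forall>\<beta>. \<exists>\<gamma>\<in>C. lt r \<beta> \<gamma>)"

definition closed :: "'a rel \<Rightarrow> 'a set \<Rightarrow> bool" where
  "closed r C \<longleftrightarrow> (\<forall>\<alpha>. (underS r \<alpha> \<noteq> {} \<and>
       (\<forall>\<beta>\<in>underS r \<alpha>. \<exists>\<gamma>\<in>C. lt r \<beta> \<gamma> \<and> lt r \<gamma> \<alpha>)) \<longrightarrow> \<alpha> \<in> C)"

definition club :: "'a rel \<Rightarrow> 'a set \<Rightarrow> bool" where
  "club r C \<longleftrightarrow> unbounded r C \<and> closed r C"

definition stationary :: "'a rel \<Rightarrow> 'a set \<Rightarrow> bool" where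
  "stationary r S \<longleftrightarrow> (\<forall>C. club r C \<longrightarrow> S \<inter> C \<noteq> {})"

definition limit :: "'a rel \<Rightarrow> 'a \<Rightarrow> bool" where
  "limit r \<alpha> \<longleftrightarrow> underS r \<alpha> \<noteq> {} \<and> (\<forall>\<beta>\<in>underS r \<alpha>. \<exists>\<gamma>. lt r \<beta> \<gamma> \<and> lt r \<gamma> \<alpha>)"

definition cofinal_in :: "'a rel \<Rightarrow> 'a set \<Rightarrow> 'a \<Rightarrow> bool" where
  "cofinal_in r c \<alpha> \<longleftrightarrow> c \<subseteq> underS r \<alpha> \<and> (\<forall>\<beta>\<in>underS r \<alpha>. \<exists>\<gamma>\<in>c. (\<beta>, \<gamma>) \<in> r)"

definition otp_omega :: "'a rel \<Rightarrow> 'a set \<Rightarrow> bool" where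
  "otp_omega r c \<longleftrightarrow> infinite c \<and> (\<forall>\<gamma>\<in>c. finite {\<delta>\<in>c. lt r \<delta> \<gamma>})"

definition otp_omega1 :: "'a rel \<Rightarrow> 'a set \<Rightarrow> bool" where
  "otp_omega1 r c \<longleftrightarrow> uncountable c \<and> (\<forall>\<gamma>\<in>c. countable {\<delta>\<in>c. lt r \<delta> \<gamma>})"

definition cof_omega :: "'a rel \<Rightarrow> 'a \<Rightarrow> bool" where
  "cof_omega r \<alpha> \<longleftrightarrow> (\<exists>c. cofinal_in r c \<alpha> \<and> otp_omega r c) \<and>
      (\<forall>c. cofinal_in r c \<alpha> \<longrightarrow> infinite c)"

definition cof_omega1 :: "'a rel \<Rightarrow> 'a \<Rightarrow> bool" where
  "cof_omega1 r \<alpha> \<longleftrightarrow> (\<exists>c. cofinal_in r c \<alpha> \<and> otp_omega1 r c) \<and>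
      (\<forall>c. cofinal_in r c \<alpha> \<longrightarrow> uncountable c)"

definition Pw1 :: "'a rel \<Rightarrow> 'a \<Rightarrow> 'a set set" where
  "Pw1 r \<alpha> = {x. x \<subseteq> underS r \<alpha> \<and> countable x}"

definition club_P :: "'a rel \<Rightarrow> 'a \<Rightarrow> 'a set set \<Rightarrow> bool" where
  "club_P r \<alpha> c \<longleftrightarrow> c \<subseteq> Pw1 r \<alpha> \<and>
     (\<forall>x\<in>Pw1 r \<alpha>. \<exists>y\<in>c. x \<subseteq> y) \<and>
     (\<forall>f :: nat \<Rightarrow> 'a set. (\<forall>n. f n \<in> c) \<and> (\<forall>n. f n \<subseteq> f (Suc n)) \<longrightarrow> \<Union>(range f) \<in> c)"

definition stationary_P :: "'a rel \<Rightarrow> 'a \<Rightarrow> 'a set set \<Rightarrow> bool" where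
  "stationary_P r \<alpha> s \<longleftrightarrow> s \<subseteq> Pw1 r \<alpha> \<and> (\<forall>c. club_P r \<alpha> c \<longrightarrow> s \<inter> c \<noteq> {})"

definition disjoint_stationary_sequence :: "'a rel \<Rightarrow> 'a set \<Rightarrow> ('a \<Rightarrow> 'a set set) \<Rightarrow> bool" where
  "disjoint_stationary_sequence r S s \<longleftrightarrow>
     S \<subseteq> {\<alpha>. cof_omega1 r \<alpha>} \<and> stationary r S \<and>
     (\<forall>\<alpha>\<in>S. stationary_P r \<alpha> (s \<alpha>)) \<and>
     (\<forall>\<alpha>\<in>S. \<forall>\<beta>\<in>S. lt r \<alpha> \<beta> \<longrightarrow> s \<alpha> \<inter> s \<beta> = {})"

definition approachability_omega1 :: "'a rel \<Rightarrow> bool" where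
  "approachability_omega1 r \<longleftrightarrow>
     (\<exists>(a :: 'a \<Rightarrow> 'a set) C. (\<forall>i. countable (a i)) \<and> club r C \<and>
        (\<forall>\<alpha>\<in>C. limit r \<alpha> \<longrightarrow>
           (\<exists>c. cofinal_in r c \<alpha> \<and>
                ((cof_omega r \<alpha> \<and> otp_omega r c) \<or> (cof_omega1 r \<alpha> \<and> otp_omega1 r c)) \<and>
                (\<forall>\<beta>\<in>underS r \<alpha>. c \<inter> underS r \<beta> \<in> a ` underS r \<alpha>))))"

end

(*
  Suppose a and C witness approachability, and fix injections e_\<gamma> of each \<gamma> < \<omega>_2
  into \<omega>_1.  At \<alpha> \<in> S \<inter> C let c be the approaching cofinal set, of order type \<omega>_1.
  The countable x \<subseteq> \<alpha> closed under a suitable countable-valued function form a club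
  in P_\<omega>1(\<alpha>), and each such x is determined by the pair (j, \<delta>) with a_j = x \<inter> c and
  \<delta> = x \<inter> \<omega>_1: it is the set of \<beta> below some \<gamma> \<in> a_j with e_\<gamma>(\<beta>) < \<delta>.  Hence s_\<alpha>
  contains a set coded by some (j_\<alpha>, \<delta>_\<alpha>) with j_\<alpha> < \<alpha>.  As the s_\<alpha> are pairwise
  disjoint, \<alpha> \<mapsto> \<delta>_\<alpha> is injective on each fibre of the regressive map \<alpha> \<mapsto> j_\<alpha>, so every
  fibre has size at most \<aleph>_1 and is bounded in \<omega>_2.  A point of S \<inter> C closed under
  these bounds lies in its own fibre and below that fibre's bound, which is absurd.
*)
theory Submission
  imports Defs "HOL-Library.Countable_Set_Type"
begin

unbundle cardinal_syntax

lemma le_aleph1_inj_on: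
  assumes Y: "le_aleph1 Y" and f: "inj_on f X" "f ` X \<subseteq> Y"
  shows "le_aleph1 X"
proof -
  obtain w where w: "Well_order w" "Field w = Y" "\<forall>y\<in>Y. countable (underS w y)"
    using Y unfolding le_aleph1_def by blast
  define \<rho> where "\<rho> = Restr w (f ` X)"
  define g where "g = inv_into X f"
  have Field_\<rho>: "Field \<rho> = f ` X"
    unfolding \<rho>_def using w f(2) Refl_Field_Restr2[of w "f ` X"] unfolding order_on_defs by auto
  have g_inj: "inj_on g (Field \<rho>)"
    unfolding Field_\<rho> g_def by (rule inj_on_inv_into) simp
  have "Well_order (dir_image \<rho> g)"
    using Well_order_dir_image[OF _ g_inj] Well_order_Restr[OF w(1)] unfolding \<rho>_def by blast
  moreover have "Field (dir_image \<rho> g) = X"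
    unfolding dir_image_Field Field_\<rho> g_def using inv_into_image_cancel[OF f(1)] by simp
  moreover have "countable (underS (dir_image \<rho> g) x)" if "x \<in> X" for x
  proof -
    have "underS (dir_image \<rho> g) x \<subseteq> g ` underS w (f x)"
    proof
      fix y assume "y \<in> underS (dir_image \<rho> g) x"
      then obtain u v where "y = g u" "x = g v" "y \<noteq> x" "(u, v) \<in> \<rho>"
        unfolding underS_def dir_image_def by auto
      moreover have "u \<in> f ` X" "v \<in> f ` X" using \<open>(u, v) \<in> \<rho>\<close> unfolding \<rho>_def by auto
      ultimately have "u = f y" "v = f x" "(u, v) \<in> w"
        unfolding g_def \<rho>_def by (simp_all add: f_inv_into_f)
      with \<open>y = g u\<close> \<open>x = g v\<close> \<open>y \<noteq> x\<close> show "y \<in> g ` underS w (f x)"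
        unfolding underS_def by auto
    qed
    moreover have "f x \<in> Y" using f(2) that by blast
    ultimately show ?thesis using w(3) by (meson countable_image countable_subset)
  qed
  ultimately show ?thesis unfolding le_aleph1_def by blast
qed

lemma Union_chain_closed:
  assumes mono: "\<And>n. Y n \<subseteq> Y (Suc n)"
    and step: "\<And>n p q. p \<in> Y n \<Longrightarrow> q \<in> Y n \<Longrightarrow> H p q \<subseteq> \<Union>(range Y)"
  shows "\<forall>p\<in>\<Union>(range Y). \<forall>q\<in>\<Union>(range Y). H p q \<subseteq> \<Union>(range Y)"
proof (intro ballI)
  fix p q assume "p \<in> \<Union>(range Y)" "q \<in> \<Union>(range Y)"
  then obtain n m where "p \<in> Y n" "q \<in> Y m" by blast
  moreover have "Y n \<subseteq> Y (max n m)" "Y m \<subseteq> Y (max n m)"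
    using lift_Suc_mono_le[of Y, OF mono] by simp_all
  ultimately show "H p q \<subseteq> \<Union>(range Y)" using step[of p "max n m" q] by blast
qed

lemma Union_range_in_Pw1:
  fixes Y :: "nat \<Rightarrow> 'a set"
  assumes "\<And>n. Y n \<in> Pw1 r \<alpha>" shows "\<Union>(range Y) \<in> Pw1 r \<alpha>"
proof -
  have "countable (\<Union>(range Y))" using assms unfolding Pw1_def by (simp add: countable_UN)
  then show ?thesis using assms unfolding Pw1_def by blast
qed

lemma club_P_closed_under:
  assumes H: "\<forall>p\<in>underS r \<alpha>. \<forall>q\<in>underS r \<alpha>. countable (H p q) \<and> H p q \<subseteq> underS r \<alpha>"
  shows "club_P r \<alpha> {x \<in> Pw1 r \<alpha>. \<forall>p\<in>x. \<forall>q\<in>x. H p q \<subseteq> x}"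
  unfolding club_P_def
proof (intro conjI allI impI ballI)
  fix y assume y: "y \<in> Pw1 r \<alpha>"
  define Y where "Y = rec_nat y (\<lambda>_ Z. Z \<union> (\<Union>p\<in>Z. \<Union>q\<in>Z. H p q))"
  have Y_Suc: "Y (Suc n) = Y n \<union> (\<Union>p\<in>Y n. \<Union>q\<in>Y n. H p q)" for n
    unfolding Y_def by simp
  have Y_Pw1: "Y n \<in> Pw1 r \<alpha>" for n
  proof (induction n)
    case 0
    then show ?case using y unfolding Y_def by simp
  next
    case (Suc n)
    then show ?case using H unfolding Y_Suc Pw1_def by (auto simp: subset_iff)
  qed
  have "\<Union>(range Y) \<in> Pw1 r \<alpha>" using Y_Pw1 by (rule Union_range_in_Pw1)
  moreover have "\<forall>p\<in>\<Union>(range Y). \<forall>q\<in>\<Union>(range Y). H p q \<subseteq> \<Union>(range Y)"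
  proof (rule Union_chain_closed)
    fix n p q assume "p \<in> Y n" "q \<in> Y n"
    then have "H p q \<subseteq> Y (Suc n)" unfolding Y_Suc by blast
    then show "H p q \<subseteq> \<Union>(range Y)" by blast
  qed (auto simp: Y_Suc)
  moreover have "y \<subseteq> \<Union>(range Y)" using UN_upper[of 0 UNIV Y] unfolding Y_def by simp
  ultimately show "\<exists>x\<in>{x \<in> Pw1 r \<alpha>. \<forall>p\<in>x. \<forall>q\<in>x. H p q \<subseteq> x}. y \<subseteq> x" by blast
next
  fix f :: "nat \<Rightarrow> 'a set"
  assume f: "(\<forall>n. f n \<in> {x \<in> Pw1 r \<alpha>. \<forall>p\<in>x. \<forall>q\<in>x. H p q \<subseteq> x}) \<and> (\<forall>n. f n \<subseteq> f (Suc n))"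
  then have "\<Union>(range f) \<in> Pw1 r \<alpha>" by (intro Union_range_in_Pw1) blast
  moreover have "\<forall>p\<in>\<Union>(range f). \<forall>q\<in>\<Union>(range f). H p q \<subseteq> \<Union>(range f)"
    using f by (intro Union_chain_closed) blast+
  ultimately show "\<Union>(range f) \<in> {x \<in> Pw1 r \<alpha>. \<forall>p\<in>x. \<forall>q\<in>x. H p q \<subseteq> x}" by blast
qed blast

locale omega2 =
  fixes r :: "'a rel"
  assumes omega2_order: "omega2_order r"
begin

lemma well_order: "Well_order r"
  using omega2_order unfolding omega2_order_def by blast

lemma Field_eq_UNIV: "Field r = UNIV"
  using omega2_order unfolding omega2_order_def by blast

lemma le_refl: "(x, x) \<in> r"
  using well_order Field_eq_UNIV unfolding order_on_defs refl_on_def by auto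

lemma le_total: "(x, y) \<in> r \<or> (y, x) \<in> r"
  using well_order Field_eq_UNIV le_refl unfolding order_on_defs total_on_def by (cases "x = y") auto

lemma le_antisym: "(x, y) \<in> r \<Longrightarrow> (y, x) \<in> r \<Longrightarrow> x = y"
  using well_order unfolding order_on_defs antisym_def by auto

lemma le_trans: "(x, y) \<in> r \<Longrightarrow> (y, z) \<in> r \<Longrightarrow> (x, z) \<in> r"
  using well_order unfolding order_on_defs trans_def by blast

lemma mem_underS_iff: "x \<in> underS r y \<longleftrightarrow> lt r x y"
  unfolding underS_def lt_def by auto

lemma lt_irrefl: "\<not> lt r x x"
  unfolding lt_def by auto

lemma lt_imp_not_le: "lt r x y \<Longrightarrow> (y, x) \<notin> r"
  unfolding lt_def using le_antisym by blast

lemma not_le_imp_lt: "(x, y) \<notin> r \<Longrightarrow> lt r y x"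
  unfolding lt_def using le_total le_refl by metis

lemma not_lt_imp_le: "\<not> lt r x y \<Longrightarrow> (y, x) \<in> r"
  using not_le_imp_lt by blast

lemma lt_trans: "lt r x y \<Longrightarrow> lt r y z \<Longrightarrow> lt r x z"
  unfolding lt_def using le_trans le_antisym by blast

lemma lt_le_trans: "lt r x y \<Longrightarrow> (y, z) \<in> r \<Longrightarrow> lt r x z"
  unfolding lt_def using le_trans le_antisym by blast

lemma le_lt_trans: "(x, y) \<in> r \<Longrightarrow> lt r y z \<Longrightarrow> lt r x z"
  unfolding lt_def using le_trans le_antisym by blast

lemma exists_least:
  assumes "x \<in> A" shows "\<exists>m\<in>A. \<forall>y\<in>A. (m, y) \<in> r"
proof -
  have "wf (r - Id)" using well_order unfolding order_on_defs well_order_on_def by blast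
  then obtain m where "m \<in> A" "\<forall>y. (y, m) \<in> r - Id \<longrightarrow> y \<notin> A"
    using assms unfolding wf_eq_minimal by blast
  then show ?thesis using le_total by blast
qed

definition omega1 :: "'a set" where
  "omega1 = {\<xi>. countable (underS r \<xi>)}"

lemma omega1_downward_closed: "\<xi> \<in> omega1 \<Longrightarrow> lt r \<eta> \<xi> \<Longrightarrow> \<eta> \<in> omega1"
proof -
  assume "\<xi> \<in> omega1" "lt r \<eta> \<xi>"
  moreover have "underS r \<eta> \<subseteq> underS r \<xi>"
    using \<open>lt r \<eta> \<xi>\<close> lt_trans unfolding mem_underS_iff[symmetric] by blast
  ultimately show ?thesis unfolding omega1_def using countable_subset by blast
qed

lemma not_le_aleph1_UNIV: "\<not> le_aleph1 (UNIV :: 'a set)"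
  using omega2_order unfolding omega2_order_def by blast

lemma le_aleph1_omega1: "le_aleph1 omega1"
  unfolding le_aleph1_def
proof (intro exI conjI ballI)
  show "Well_order (Restr r omega1)" using well_order Well_order_Restr by blast
  show "Field (Restr r omega1) = omega1"
    using well_order Field_eq_UNIV Refl_Field_Restr2[of r omega1] unfolding order_on_defs by auto
  fix \<xi> assume "\<xi> \<in> omega1"
  moreover have "underS (Restr r omega1) \<xi> \<subseteq> underS r \<xi>" unfolding underS_def by auto
  ultimately show "countable (underS (Restr r omega1) \<xi>)"
    unfolding omega1_def using countable_subset by blast
qed

lemma uncountable_omega1: "uncountable omega1"
proof
  assume countable: "countable omega1"
  show False
  proof (cases "omega1 = UNIV")
    case True
    then have "le_aleph1 (UNIV :: 'a set)"
      unfolding le_aleph1_def omega1_def using well_order Field_eq_UNIV by blast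
    then show False using not_le_aleph1_UNIV by blast
  next
    case False
    then obtain m where m: "m \<notin> omega1" "\<forall>y\<in>- omega1. (m, y) \<in> r"
      using exists_least[of _ "- omega1"] by blast
    have "underS r m \<subseteq> omega1"
    proof
      fix x assume "x \<in> underS r m"
      then show "x \<in> omega1" using m(2) lt_imp_not_le unfolding mem_underS_iff by blast
    qed
    then have "m \<in> omega1" using countable countable_subset unfolding omega1_def by blast
    then show False using m(1) by blast
  qed
qed

lemma infinite_omega1: "infinite omega1"
  using uncountable_omega1 countable_finite by blast

lemma card_le_omega1_iff: "|X| \<le>o |omega1| \<longleftrightarrow> le_aleph1 X"
proof
  assume "|X| \<le>o |omega1|"
  then obtain f where "inj_on f X" "f ` X \<subseteq> omega1" using card_of_ordLeq by metis
  then show "le_aleph1 X" using le_aleph1_inj_on le_aleph1_omega1 by blast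
next
  assume "le_aleph1 X"
  then obtain w where w: "Well_order w" "Field w = X" "\<forall>x\<in>X. countable (underS w x)"
    unfolding le_aleph1_def by blast
  obtain \<rho> where \<rho>: "Well_order \<rho>" "Field \<rho> = omega1"
    using le_aleph1_omega1 unfolding le_aleph1_def by blast
  from ordLess_or_ordLeq[OF \<rho>(1) w(1)] show "|X| \<le>o |omega1|"
  proof
    assume "\<rho> <o w"
    then obtain x where x: "x \<in> X" "\<rho> =o Restr w (underS w x)"
      using ordLess_iff_ordIso_Restr[OF w(1) \<rho>(1)] w(2) by blast
    then have "|omega1| \<le>o |Field (Restr w (underS w x))|"
      using card_of_mono2 ordIso_iff_ordLeq \<rho>(2) by metis
    also have "|Field (Restr w (underS w x))| \<le>o |underS w x|"
      by (rule card_of_mono1) (auto simp: Field_def)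
    also have "|underS w x| \<le>o natLeq"
      using w(3) x(1) countable_card_le_natLeq by blast
    finally show ?thesis
      using uncountable_omega1 countable_card_le_natLeq by blast
  next
    assume "w \<le>o \<rho>"
    then show ?thesis using card_of_mono2 w(2) \<rho>(2) by fastforce
  qed
qed

lemma card_le_omega1_if_countable: "countable X \<Longrightarrow> |X| \<le>o |omega1|"
  using ordLeq_transitive[of "|X|" natLeq "|omega1|"] countable_card_le_natLeq
    infinite_iff_natLeq_ordLeq infinite_omega1 by blast

lemma card_Un_le_omega1: "|A| \<le>o |omega1| \<Longrightarrow> |B| \<le>o |omega1| \<Longrightarrow> |A \<union> B| \<le>o |omega1|"
  using card_of_Un_ordLeq_infinite_Field[of "|omega1|" A B] infinite_omega1
  by (simp add: card_of_card_order_on Field_card_of)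

lemma card_under_le_omega1: "|under r \<gamma>| \<le>o |omega1|"
proof -
  have "under r \<gamma> = {\<gamma>} \<union> underS r \<gamma>"
    unfolding under_def underS_def using le_refl by auto
  moreover have "|underS r \<gamma>| \<le>o |omega1|"
    using omega2_order card_le_omega1_iff unfolding omega2_order_def by blast
  ultimately show ?thesis
    using card_Un_le_omega1[of "{\<gamma>}" "underS r \<gamma>"] card_le_omega1_if_countable[of "{\<gamma>}"]
    by simp
qed

lemma bounded_if_card_le_omega1:
  assumes "|X| \<le>o |omega1|" shows "\<exists>\<gamma>. \<forall>x\<in>X. lt r x \<gamma>"
proof (rule ccontr)
  assume "\<nexists>\<gamma>. \<forall>x\<in>X. lt r x \<gamma>"
  then have "UNIV \<subseteq> (\<Union>x\<in>X. under r x)"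
    unfolding under_def using not_lt_imp_le by blast
  moreover have "|\<Union>x\<in>X. under r x| \<le>o |omega1|"
    using card_of_UNION_ordLeq_infinite[OF infinite_omega1 assms] card_under_le_omega1 by blast
  ultimately have "|UNIV :: 'a set| \<le>o |omega1|"
    using card_of_mono1 ordLeq_transitive by metis
  then show False using card_le_omega1_iff not_le_aleph1_UNIV by blast
qed

lemma exists_least_strict_upper_bound:
  assumes "|X| \<le>o |omega1|"
  shows "\<exists>\<alpha>. (\<forall>x\<in>X. lt r x \<alpha>) \<and> (\<forall>\<beta>. lt r \<beta> \<alpha> \<longrightarrow> (\<exists>x\<in>X. (\<beta>, x) \<in> r))"
proof -
  obtain \<gamma> where "\<forall>x\<in>X. lt r x \<gamma>" using bounded_if_card_le_omega1[OF assms] by blast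
  then obtain \<alpha> where \<alpha>: "\<forall>x\<in>X. lt r x \<alpha>" "\<forall>\<gamma>. (\<forall>x\<in>X. lt r x \<gamma>) \<longrightarrow> (\<alpha>, \<gamma>) \<in> r"
    using exists_least[of \<gamma> "{\<gamma>. \<forall>x\<in>X. lt r x \<gamma>}"] by blast
  have "\<exists>x\<in>X. (\<beta>, x) \<in> r" if "lt r \<beta> \<alpha>" for \<beta>
    using \<alpha>(2) that lt_imp_not_le not_le_imp_lt by blast
  then show ?thesis using \<alpha>(1) by blast
qed

definition closure_points :: "('a \<Rightarrow> 'a) \<Rightarrow> 'a set" where
  "closure_points h = {\<alpha>. \<forall>\<beta>. lt r \<beta> \<alpha> \<longrightarrow> lt r (h \<beta>) \<alpha>}"

lemma closed_Int: "closed r C \<Longrightarrow> closed r D \<Longrightarrow> closed r (C \<inter> D)"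
  unfolding closed_def by blast

lemma closed_closure_points: "closed r (closure_points h)"
  unfolding closed_def
proof (intro allI impI)
  fix \<alpha> assume \<alpha>: "underS r \<alpha> \<noteq> {} \<and> (\<forall>\<beta>\<in>underS r \<alpha>. \<exists>\<gamma>\<in>closure_points h. lt r \<beta> \<gamma> \<and> lt r \<gamma> \<alpha>)"
  have "lt r (h \<beta>) \<alpha>" if "lt r \<beta> \<alpha>" for \<beta>
  proof -
    have "\<beta> \<in> underS r \<alpha>" using that mem_underS_iff by blast
    then obtain \<gamma> where "\<gamma> \<in> closure_points h" "lt r \<beta> \<gamma>" "lt r \<gamma> \<alpha>"
      using \<alpha> by blast
    then show ?thesis unfolding closure_points_def using lt_trans[of "h \<beta>" \<gamma> \<alpha>] by blast
  qed
  then show "\<alpha> \<in> closure_points h" unfolding closure_points_def by blast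
qed

lemma exists_club_element_above:
  assumes "club r C"
  shows "\<exists>\<gamma>\<in>C. lt r b \<gamma> \<and> (\<forall>\<xi>\<in>under r b. lt r (h \<xi>) \<gamma>)"
proof -
  have "|h ` under r b| \<le>o |omega1|"
    using ordLeq_transitive[OF card_of_image card_under_le_omega1] .
  then have "|under r b \<union> h ` under r b| \<le>o |omega1|"
    using card_Un_le_omega1 card_under_le_omega1 by blast
  then obtain t where t: "\<forall>x\<in>under r b \<union> h ` under r b. lt r x t"
    using bounded_if_card_le_omega1 by blast
  obtain \<gamma> where "\<gamma> \<in> C" "lt r t \<gamma>"
    using assms unfolding club_def unbounded_def by blast
  moreover have "b \<in> under r b" unfolding under_def using le_refl by blast
  ultimately show ?thesis using t lt_trans by blast
qed

lemma unbounded_Int_closure_points: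
  assumes C: "club r C"
  shows "unbounded r (C \<inter> closure_points h)"
  unfolding unbounded_def
proof
  fix \<beta>\<^sub>0
  have "\<forall>b. \<exists>\<gamma>. \<gamma> \<in> C \<and> lt r b \<gamma> \<and> (\<forall>\<xi>\<in>under r b. lt r (h \<xi>) \<gamma>)"
    using exists_club_element_above[OF C] by blast
  then obtain N where "\<forall>b. N b \<in> C \<and> lt r b (N b) \<and> (\<forall>\<xi>\<in>under r b. lt r (h \<xi>) (N b))"
    by metis
  then have N: "\<And>b. N b \<in> C" "\<And>b. lt r b (N b)"
    "\<And>b \<xi>. \<xi> \<in> under r b \<Longrightarrow> lt r (h \<xi>) (N b)"
    by blast+
  define B where "B n = (N ^^ n) \<beta>\<^sub>0" for n
  have B_Suc: "B (Suc n) = N (B n)" for n unfolding B_def by simp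
  obtain \<alpha> where \<alpha>: "\<And>n. lt r (B n) \<alpha>" "\<And>\<beta>. lt r \<beta> \<alpha> \<Longrightarrow> \<exists>n. (\<beta>, B n) \<in> r"
    using exists_least_strict_upper_bound[OF card_le_omega1_if_countable[of "range B"]] by auto
  have "underS r \<alpha> \<noteq> {} \<and> (\<forall>\<beta>\<in>underS r \<alpha>. \<exists>\<gamma>\<in>C. lt r \<beta> \<gamma> \<and> lt r \<gamma> \<alpha>)"
  proof (intro conjI ballI)
    show "underS r \<alpha> \<noteq> {}" using \<alpha>(1) mem_underS_iff by blast
    fix \<beta> assume "\<beta> \<in> underS r \<alpha>"
    then obtain n where "(\<beta>, B n) \<in> r" using \<alpha>(2) mem_underS_iff by blast
    then show "\<exists>\<gamma>\<in>C. lt r \<beta> \<gamma> \<and> lt r \<gamma> \<alpha>"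
      using N(1,2) \<alpha>(1)[of "Suc n"] le_lt_trans unfolding B_Suc by blast
  qed
  then have "\<alpha> \<in> C" using C unfolding club_def closed_def by blast
  moreover have "\<alpha> \<in> closure_points h"
    unfolding closure_points_def
  proof (intro CollectI allI impI)
    fix \<beta> assume "lt r \<beta> \<alpha>"
    then obtain n where "\<beta> \<in> under r (B n)" using \<alpha>(2) unfolding under_def by blast
    then show "lt r (h \<beta>) \<alpha>"
      using N(3) \<alpha>(1)[of "Suc n"] lt_trans unfolding B_Suc by blast
  qed
  moreover have "lt r \<beta>\<^sub>0 \<alpha>" using \<alpha>(1)[of 0] unfolding B_def by simp
  ultimately show "\<exists>\<gamma>\<in>C \<inter> closure_points h. lt r \<beta>\<^sub>0 \<gamma>" by blast
qed

lemma club_Int_closure_points: "club r C \<Longrightarrow> club r (C \<inter> closure_points h)"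
  using unbounded_Int_closure_points closed_closure_points closed_Int unfolding club_def by blast

lemma regressive_has_large_fiber:
  assumes "stationary r S" "club r C" "\<forall>\<alpha>\<in>S \<inter> C. lt r (f \<alpha>) \<alpha>"
  shows "\<exists>j. \<not> |{\<alpha> \<in> S \<inter> C. f \<alpha> = j}| \<le>o |omega1|"
proof (rule ccontr)
  assume "\<nexists>j. \<not> |{\<alpha> \<in> S \<inter> C. f \<alpha> = j}| \<le>o |omega1|"
  then have "\<forall>j. \<exists>\<gamma>. \<forall>\<alpha>\<in>{\<alpha> \<in> S \<inter> C. f \<alpha> = j}. lt r \<alpha> \<gamma>"
    using bounded_if_card_le_omega1 by blast
  then obtain g where g: "\<forall>j. \<forall>\<alpha>\<in>{\<alpha> \<in> S \<inter> C. f \<alpha> = j}. lt r \<alpha> (g j)"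
    by metis
  obtain \<alpha> where \<alpha>: "\<alpha> \<in> S" "\<alpha> \<in> C" "\<alpha> \<in> closure_points g"
    using assms(1) club_Int_closure_points[OF assms(2)] unfolding stationary_def by blast
  then have "lt r (g (f \<alpha>)) \<alpha>" using assms(3) unfolding closure_points_def by blast
  moreover have "lt r \<alpha> (g (f \<alpha>))" using g \<alpha>(1,2) by blast
  ultimately show False using lt_trans lt_irrefl by metis
qed

lemma uncountable_underS_if_cof_omega1: "cof_omega1 r \<alpha> \<Longrightarrow> uncountable (underS r \<alpha>)"
proof -
  have "cofinal_in r (underS r \<alpha>) \<alpha>" unfolding cofinal_in_def using le_refl by blast
  then show "cof_omega1 r \<alpha> \<Longrightarrow> uncountable (underS r \<alpha>)" unfolding cof_omega1_def by blast
qed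

lemma bounded_below_if_cof_omega1:
  assumes "cof_omega1 r \<alpha>" "countable x" "x \<subseteq> underS r \<alpha>"
  shows "\<exists>\<beta>. lt r \<beta> \<alpha> \<and> (\<forall>y\<in>x. lt r y \<beta>)"
proof -
  have "\<not> cofinal_in r x \<alpha>" using assms unfolding cof_omega1_def by blast
  then obtain \<beta> where "\<beta> \<in> underS r \<alpha>" "\<forall>y\<in>x. (\<beta>, y) \<notin> r"
    using assms(3) unfolding cofinal_in_def by blast
  then show ?thesis using not_le_imp_lt mem_underS_iff by blast
qed

lemma limit_if_cof_omega1:
  assumes "cof_omega1 r \<alpha>" shows "limit r \<alpha>"
  unfolding limit_def
proof (intro conjI ballI)
  show "underS r \<alpha> \<noteq> {}" using uncountable_underS_if_cof_omega1[OF assms] by auto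
  fix \<beta> assume "\<beta> \<in> underS r \<alpha>"
  then obtain \<gamma> where "lt r \<gamma> \<alpha>" "\<forall>y\<in>{\<beta>}. lt r y \<gamma>"
    using bounded_below_if_cof_omega1[OF assms, of "{\<beta>}"] by auto
  then show "\<exists>\<gamma>. lt r \<beta> \<gamma> \<and> lt r \<gamma> \<alpha>" by blast
qed

lemma omega1_subset_underS_if_cof_omega1:
  assumes "cof_omega1 r \<alpha>" shows "omega1 \<subseteq> underS r \<alpha>"
proof
  fix \<xi> assume "\<xi> \<in> omega1"
  show "\<xi> \<in> underS r \<alpha>"
  proof (rule ccontr)
    assume "\<xi> \<notin> underS r \<alpha>"
    then have "(\<alpha>, \<xi>) \<in> r" using not_lt_imp_le mem_underS_iff by blast
    then have "underS r \<alpha> \<subseteq> underS r \<xi>"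
      using lt_le_trans unfolding mem_underS_iff[symmetric] by blast
    then have "countable (underS r \<alpha>)"
      using \<open>\<xi> \<in> omega1\<close> countable_subset unfolding omega1_def by blast
    then show False using uncountable_underS_if_cof_omega1[OF assms] by blast
  qed
qed

definition decoded_set :: "('a \<Rightarrow> 'a set) \<Rightarrow> ('a \<Rightarrow> 'a \<Rightarrow> 'a) \<Rightarrow> 'a \<Rightarrow> 'a \<Rightarrow> 'a set" where
  "decoded_set a e j \<delta> = (\<Union>\<gamma>\<in>a j. {\<beta>. lt r \<beta> \<gamma> \<and> e \<gamma> \<beta> \<in> underS r \<delta>})"

end

locale approach_point = omega2 +
  fixes a :: "'a \<Rightarrow> 'a set" and e :: "'a \<Rightarrow> 'a \<Rightarrow> 'a" and c :: "'a set" and \<alpha> :: 'a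
  assumes cof_omega1: "cof_omega1 r \<alpha>"
    and cofinal: "cofinal_in r c \<alpha>"
    and approach: "\<forall>\<beta>\<in>underS r \<alpha>. c \<inter> underS r \<beta> \<in> a ` underS r \<alpha>"
    and countable_a: "countable (a i)"
    and inj_e: "inj_on (e \<gamma>) (underS r \<gamma>)"
    and e_into_omega1: "e \<gamma> ` underS r \<gamma> \<subseteq> omega1"
begin

lemma c_subset: "c \<subseteq> underS r \<alpha>"
  using cofinal unfolding cofinal_in_def by blast

definition next_in_c :: "'a \<Rightarrow> 'a" where
  "next_in_c p = (SOME \<gamma>. \<gamma> \<in> c \<and> lt r p \<gamma>)"

lemma next_in_c:
  assumes "lt r p \<alpha>" shows "next_in_c p \<in> c" "lt r p (next_in_c p)"
proof -
  obtain \<gamma>' where "lt r p \<gamma>'" "lt r \<gamma>' \<alpha>"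
    using assms limit_if_cof_omega1[OF cof_omega1] mem_underS_iff unfolding limit_def by blast
  moreover obtain \<gamma> where "\<gamma> \<in> c" "(\<gamma>', \<gamma>) \<in> r"
    using cofinal \<open>lt r \<gamma>' \<alpha>\<close> mem_underS_iff unfolding cofinal_in_def by blast
  ultimately have "\<exists>\<gamma>. \<gamma> \<in> c \<and> lt r p \<gamma>" using lt_le_trans by blast
  then show "next_in_c p \<in> c" "lt r p (next_in_c p)"
    unfolding next_in_c_def by (metis (mono_tags, lifting) someI_ex)+
qed

text \<open>A set closed under \<open>closure_fn\<close> meets \<open>omega1\<close> in an initial segment, is closed
  under each \<open>e \<gamma>\<close> and its inverse, and meets \<open>c\<close> in an initial segment of \<open>c\<close> that is
  cofinal in it.\<close>

definition closure_fn :: "'a \<Rightarrow> 'a \<Rightarrow> 'a set" where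
  "closure_fn p q =
     (if p \<in> omega1 then underS r p else {}) \<union> (if lt r q p then {e p q} else {}) \<union>
     {\<beta>. lt r \<beta> p \<and> e p \<beta> = q} \<union> {next_in_c p} \<union> (if p \<in> c then c \<inter> underS r p else {})"

lemma closure_fn_countable_subset:
  assumes "p \<in> underS r \<alpha>" "q \<in> underS r \<alpha>"
  shows "countable (closure_fn p q) \<and> closure_fn p q \<subseteq> underS r \<alpha>"
proof
  have p: "lt r p \<alpha>" using assms(1) mem_underS_iff by blast
  have underS_p: "underS r p \<subseteq> underS r \<alpha>" using p lt_trans mem_underS_iff by blast
  have "{\<beta>. lt r \<beta> p \<and> e p \<beta> = q} \<subseteq> inv_into (underS r p) (e p) ` {q}"
    using inv_into_f_f[OF inj_e] mem_underS_iff by fastforce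
  then have "countable {\<beta>. lt r \<beta> p \<and> e p \<beta> = q}" by (rule countable_subset) simp
  moreover obtain i where "c \<inter> underS r p = a i" using approach assms(1) by blast
  ultimately show "countable (closure_fn p q)"
    unfolding closure_fn_def omega1_def using countable_a by auto
  have "e p q \<in> underS r \<alpha>" if "lt r q p"
    using that e_into_omega1 omega1_subset_underS_if_cof_omega1[OF cof_omega1] mem_underS_iff
    by blast
  then show "closure_fn p q \<subseteq> underS r \<alpha>"
    unfolding closure_fn_def using underS_p next_in_c(1)[OF p] c_subset mem_underS_iff
    by (auto split: if_splits)
qed

definition closed_sets :: "'a set set" where
  "closed_sets = {x \<in> Pw1 r \<alpha>. \<forall>p\<in>x. \<forall>q\<in>x. closure_fn p q \<subseteq> x}"

lemma club_P_closed_sets: "club_P r \<alpha> closed_sets"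
  unfolding closed_sets_def using closure_fn_countable_subset by (intro club_P_closed_under) blast

lemma closed_setsD:
  assumes "x \<in> closed_sets"
  shows "x \<subseteq> underS r \<alpha>" "countable x"
    and "\<And>\<xi>. \<xi> \<in> x \<Longrightarrow> \<xi> \<in> omega1 \<Longrightarrow> underS r \<xi> \<subseteq> x"
    and "\<And>\<gamma> \<beta>. \<gamma> \<in> x \<Longrightarrow> \<beta> \<in> x \<Longrightarrow> lt r \<beta> \<gamma> \<Longrightarrow> e \<gamma> \<beta> \<in> x"
    and "\<And>\<gamma> \<beta>. \<gamma> \<in> x \<Longrightarrow> lt r \<beta> \<gamma> \<Longrightarrow> e \<gamma> \<beta> \<in> x \<Longrightarrow> \<beta> \<in> x"
    and "\<And>y. y \<in> x \<Longrightarrow> \<exists>\<gamma>\<in>x \<inter> c. lt r y \<gamma>"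
    and "\<And>\<gamma>. \<gamma> \<in> x \<Longrightarrow> \<gamma> \<in> c \<Longrightarrow> c \<inter> underS r \<gamma> \<subseteq> x"
proof -
  have closed: "closure_fn p q \<subseteq> x" if "p \<in> x" "q \<in> x" for p q
    using assms that unfolding closed_sets_def by blast
  show "x \<subseteq> underS r \<alpha>" "countable x" using assms unfolding closed_sets_def Pw1_def by blast+
  show "underS r \<xi> \<subseteq> x" if "\<xi> \<in> x" "\<xi> \<in> omega1" for \<xi>
    using closed[OF that(1) that(1)] that(2) unfolding closure_fn_def by auto
  show "e \<gamma> \<beta> \<in> x" if "\<gamma> \<in> x" "\<beta> \<in> x" "lt r \<beta> \<gamma>" for \<gamma> \<beta>
    using closed[OF that(1,2)] that(3) unfolding closure_fn_def by auto
  show "\<beta> \<in> x" if "\<gamma> \<in> x" "lt r \<beta> \<gamma>" "e \<gamma> \<beta> \<in> x" for \<gamma> \<beta>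
    using closed[OF that(1,3)] that(2) unfolding closure_fn_def by auto
  show "c \<inter> underS r \<gamma> \<subseteq> x" if "\<gamma> \<in> x" "\<gamma> \<in> c" for \<gamma>
    using closed[OF that(1) that(1)] that(2) unfolding closure_fn_def by auto
  fix y assume "y \<in> x"
  then have "next_in_c y \<in> x" "lt r y \<alpha>"
    using closed[of y y] \<open>x \<subseteq> underS r \<alpha>\<close> mem_underS_iff unfolding closure_fn_def by auto
  then show "\<exists>\<gamma>\<in>x \<inter> c. lt r y \<gamma>" using next_in_c by blast
qed

lemma closed_set_Int_c:
  assumes x: "x \<in> closed_sets" shows "\<exists>j\<in>underS r \<alpha>. a j = x \<inter> c"
proof -
  note x = closed_setsD[OF x]
  obtain \<beta>\<^sub>0 where \<beta>\<^sub>0: "lt r \<beta>\<^sub>0 \<alpha>" "\<forall>y\<in>x. lt r y \<beta>\<^sub>0"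
    using bounded_below_if_cof_omega1[OF cof_omega1 x(2,1)] by blast
  then obtain \<gamma>\<^sub>0 where "\<gamma>\<^sub>0 \<in> c" "(\<beta>\<^sub>0, \<gamma>\<^sub>0) \<in> r"
    using cofinal mem_underS_iff unfolding cofinal_in_def by blast
  then have "\<gamma>\<^sub>0 \<in> {\<gamma>\<in>c. \<forall>y\<in>x. lt r y \<gamma>}" using \<beta>\<^sub>0(2) lt_le_trans by blast
  then obtain \<beta> where \<beta>: "\<beta> \<in> c" "\<forall>y\<in>x. lt r y \<beta>"
    and least: "\<And>\<gamma>. \<gamma> \<in> c \<Longrightarrow> \<forall>y\<in>x. lt r y \<gamma> \<Longrightarrow> (\<beta>, \<gamma>) \<in> r"
    using exists_least[of \<gamma>\<^sub>0 "{\<gamma>\<in>c. \<forall>y\<in>x. lt r y \<gamma>}"] by blast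
  have "x \<inter> c = c \<inter> underS r \<beta>"
  proof
    show "x \<inter> c \<subseteq> c \<inter> underS r \<beta>" using \<beta>(2) mem_underS_iff by blast
    show "c \<inter> underS r \<beta> \<subseteq> x \<inter> c"
    proof
      fix g assume g: "g \<in> c \<inter> underS r \<beta>"
      then obtain y where "y \<in> x" "\<not> lt r y g"
        using least lt_imp_not_le mem_underS_iff by blast
      moreover obtain \<gamma> where "\<gamma> \<in> x \<inter> c" "lt r y \<gamma>" using x(6) calculation(1) by blast
      ultimately have "g \<in> c \<inter> underS r \<gamma>"
        using g not_lt_imp_le le_lt_trans mem_underS_iff by blast
      then show "g \<in> x \<inter> c" using x(7) \<open>\<gamma> \<in> x \<inter> c\<close> by blast
    qed
  qed
  moreover have "\<beta> \<in> underS r \<alpha>" using \<beta>(1) c_subset by blast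
  ultimately show ?thesis using approach by force
qed

lemma closed_set_Int_omega1:
  assumes x: "x \<in> closed_sets" shows "\<exists>\<delta>\<in>omega1. x \<inter> omega1 = underS r \<delta>"
proof -
  note x = closed_setsD[OF x]
  have "\<not> omega1 \<subseteq> x" using uncountable_omega1 x(2) countable_subset by blast
  then obtain \<delta> where \<delta>: "\<delta> \<in> omega1 - x" and least: "\<And>\<xi>. \<xi> \<in> omega1 - x \<Longrightarrow> (\<delta>, \<xi>) \<in> r"
    using exists_least[of _ "omega1 - x"] by blast
  have "x \<inter> omega1 = underS r \<delta>"
  proof
    show "x \<inter> omega1 \<subseteq> underS r \<delta>"
    proof
      fix \<xi> assume \<xi>: "\<xi> \<in> x \<inter> omega1"
      show "\<xi> \<in> underS r \<delta>"
      proof (rule ccontr)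
        assume "\<xi> \<notin> underS r \<delta>"
        then have "\<delta> \<in> underS r \<xi>"
          using \<xi> \<delta> not_lt_imp_le mem_underS_iff unfolding underS_def by auto
        then show False using x(3) \<xi> \<delta> by blast
      qed
    qed
    show "underS r \<delta> \<subseteq> x \<inter> omega1"
    proof
      fix \<xi> assume "\<xi> \<in> underS r \<delta>"
      then have "lt r \<xi> \<delta>" using mem_underS_iff by blast
      then have "\<xi> \<in> omega1" using omega1_downward_closed \<delta> by blast
      moreover have "\<xi> \<in> x" using least calculation \<open>lt r \<xi> \<delta>\<close> lt_imp_not_le by blast
      ultimately show "\<xi> \<in> x \<inter> omega1" by blast
    qed
  qed
  then show ?thesis using \<delta> by blast
qed

lemma closed_set_eq_decoded_set:
  assumes x: "x \<in> closed_sets"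
  shows "\<exists>j \<delta>. lt r j \<alpha> \<and> \<delta> \<in> omega1 \<and> x = decoded_set a e j \<delta>"
proof -
  obtain j where j: "j \<in> underS r \<alpha>" "a j = x \<inter> c" using closed_set_Int_c[OF x] by blast
  obtain \<delta> where \<delta>: "\<delta> \<in> omega1" "x \<inter> omega1 = underS r \<delta>" using closed_set_Int_omega1[OF x] by blast
  note x = closed_setsD[OF x]
  have "x = decoded_set a e j \<delta>"
  proof
    show "x \<subseteq> decoded_set a e j \<delta>"
    proof
      fix y assume "y \<in> x"
      then obtain \<gamma> where \<gamma>: "\<gamma> \<in> x \<inter> c" "lt r y \<gamma>" using x(6) by blast
      then have "e \<gamma> y \<in> x \<inter> omega1"
        using x(4) \<open>y \<in> x\<close> e_into_omega1 mem_underS_iff by blast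
      then show "y \<in> decoded_set a e j \<delta>"
        unfolding decoded_set_def using \<gamma> j(2) \<delta>(2) by blast
    qed
    show "decoded_set a e j \<delta> \<subseteq> x"
      unfolding decoded_set_def using x(5) j(2) \<delta>(2) by blast
  qed
  then show ?thesis using j(1) \<delta>(1) mem_underS_iff by blast
qed

lemma exists_decoded_set_in_stationary:
  assumes "stationary_P r \<alpha> s"
  shows "\<exists>j \<delta>. lt r j \<alpha> \<and> \<delta> \<in> omega1 \<and> decoded_set a e j \<delta> \<in> s"
proof -
  obtain x where "x \<in> s" "x \<in> closed_sets"
    using assms club_P_closed_sets unfolding stationary_P_def by blast
  then show ?thesis using closed_set_eq_decoded_set by blast
qed

end

context omega2
begin

lemma exists_injections_into_omega1:
  "\<exists>e. \<forall>\<gamma>. inj_on (e \<gamma>) (underS r \<gamma>) \<and> e \<gamma> ` underS r \<gamma> \<subseteq> omega1"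
proof -
  have "|underS r \<gamma>| \<le>o |omega1|" for \<gamma>
    using omega2_order card_le_omega1_iff unfolding omega2_order_def by blast
  then have "\<forall>\<gamma>. \<exists>f. inj_on f (underS r \<gamma>) \<and> f ` underS r \<gamma> \<subseteq> omega1"
    using card_of_ordLeq by blast
  then show ?thesis by metis
qed

lemma disjoint_family_not_regressively_coded:
  assumes "stationary r S" "club r C"
    and disjoint: "\<forall>\<alpha>\<in>S. \<forall>\<beta>\<in>S. lt r \<alpha> \<beta> \<longrightarrow> s \<alpha> \<inter> s \<beta> = {}"
    and coded: "\<forall>\<alpha>\<in>S \<inter> C. lt r (J \<alpha>) \<alpha> \<and> D \<alpha> \<in> omega1 \<and> F (J \<alpha>) (D \<alpha>) \<in> s \<alpha>"
  shows False
proof -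
  obtain j where large: "\<not> |{\<alpha> \<in> S \<inter> C. J \<alpha> = j}| \<le>o |omega1|"
    using regressive_has_large_fiber[OF assms(1,2)] coded by blast
  have "inj_on D {\<alpha> \<in> S \<inter> C. J \<alpha> = j}"
  proof (rule inj_onI)
    fix \<alpha> \<alpha>' assume "\<alpha> \<in> {\<alpha> \<in> S \<inter> C. J \<alpha> = j}" "\<alpha>' \<in> {\<alpha> \<in> S \<inter> C. J \<alpha> = j}" "D \<alpha> = D \<alpha>'"
    then have "s \<alpha> \<inter> s \<alpha>' \<noteq> {}" "\<alpha> \<in> S" "\<alpha>' \<in> S" using coded by force+
    moreover have "\<alpha> = \<alpha>' \<or> lt r \<alpha> \<alpha>' \<or> lt r \<alpha>' \<alpha>" using le_total unfolding lt_def by blast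
    ultimately show "\<alpha> = \<alpha>'" using disjoint by blast
  qed
  moreover have "D ` {\<alpha> \<in> S \<inter> C. J \<alpha> = j} \<subseteq> omega1" using coded by blast
  ultimately show False using large card_of_ordLeq by blast
qed

end

theorem corollary1p6:
  fixes r :: "'a rel"
  assumes "omega2_order r"
    and "\<exists>S s. disjoint_stationary_sequence r S s"
  shows "\<not> approachability_omega1 r"
proof
  interpret omega2 r using assms(1) by unfold_locales
  obtain S s where S: "S \<subseteq> {\<alpha>. cof_omega1 r \<alpha>}" "stationary r S"
    "\<forall>\<alpha>\<in>S. stationary_P r \<alpha> (s \<alpha>)" "\<forall>\<alpha>\<in>S. \<forall>\<beta>\<in>S. lt r \<alpha> \<beta> \<longrightarrow> s \<alpha> \<inter> s \<beta> = {}"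
    using assms(2) unfolding disjoint_stationary_sequence_def by blast
  assume "approachability_omega1 r"
  then obtain a C where countable_a: "\<forall>i. countable (a i)" and "club r C"
    and approach: "\<forall>\<alpha>\<in>C. limit r \<alpha> \<longrightarrow> (\<exists>c. cofinal_in r c \<alpha> \<and>
        ((cof_omega r \<alpha> \<and> otp_omega r c) \<or> (cof_omega1 r \<alpha> \<and> otp_omega1 r c)) \<and>
        (\<forall>\<beta>\<in>underS r \<alpha>. c \<inter> underS r \<beta> \<in> a ` underS r \<alpha>))"
    unfolding approachability_omega1_def by blast
  obtain e where e: "\<forall>\<gamma>. inj_on (e \<gamma>) (underS r \<gamma>) \<and> e \<gamma> ` underS r \<gamma> \<subseteq> omega1"
    using exists_injections_into_omega1 by blast
  have "\<exists>j \<delta>. lt r j \<alpha> \<and> \<delta> \<in> omega1 \<and> decoded_set a e j \<delta> \<in> s \<alpha>" if "\<alpha> \<in> S \<inter> C" for \<alpha>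
  proof -
    have "cof_omega1 r \<alpha>" "\<alpha> \<in> C" using S(1) that by blast+
    then obtain c where "cofinal_in r c \<alpha>" "\<forall>\<beta>\<in>underS r \<alpha>. c \<inter> underS r \<beta> \<in> a ` underS r \<alpha>"
      using approach limit_if_cof_omega1 by meson
    then interpret approach_point r a e c \<alpha>
      using \<open>cof_omega1 r \<alpha>\<close> countable_a e by unfold_locales blast+
    show ?thesis using exists_decoded_set_in_stationary S(3) that by blast
  qed
  then obtain J D
    where "\<forall>\<alpha>\<in>S \<inter> C. lt r (J \<alpha>) \<alpha> \<and> D \<alpha> \<in> omega1 \<and> decoded_set a e (J \<alpha>) (D \<alpha>) \<in> s \<alpha>"
    by metis
  then show False using disjoint_family_not_regressively_coded S(2,4) \<open>club r C\<close> by blast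
qed

end
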